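(* There do not exist positive rational numbers $x_1,x_2,x_3,d_1,d_2,d_3$ satisfying $$x_1^2+x_2^2+x_3^2=1,\quad x_2^2+x_3^2=d_1^2,\quad x_3^2+x_1^2=d_2^2,\quad x_1^2+x_2^2=d_3^2$$ together with a rational number $c$ such that $$e_{[1,1]}=c,\qquad e_{[0,1]}=c,\qquad e_{[1,0]}=c-1.$$ In other words, no rational perfect cuboid with unit space diagonal corresponds to the one-parameter family $E_{11}=c$, $E_{01}=c$, $E_{10}=c-1$ of rational solutions of the equation $(2E_{11})^2+(E_{01}^2+1-E_{10}^2)^2=8E_{01}^2$.
   Context: A rational perfect cuboid with unit space diagonal is a tuple of positive rationals $x_1,x_2,x_3$ (edges) and $d_1,d_2,d_3$ (face diagonals) satisfying $x_1^2+x_2^2+x_3^2=1$, $x_2^2+x_3^2=d_1^2$, $x_3^2+x_1^2=d_2^2$, $x_1^2+x_2^2=d_3^2$. (Integer perfect cuboids, i.e. cuboids with integer edges, integer face diagonals and integer space diagonal $L$, correspond to these after dividing by $L$.) The elementary multisymmetric polynomials used are $e_{[1,0]}=x_1+x_2+x_3$, $e_{[0,1]}=d_1+d_2+d_3$, and $e_{[1,1]}=x_1d_2+d_1x_2+x_2d_3+d_2x_3+x_3d_1+d_3x_1$. *)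

theory Defs
  imports Complex_Main
begin

definition e10 :: "rat \<Rightarrow> rat \<Rightarrow> rat \<Rightarrow> rat" where
  "e10 x1 x2 x3 = x1 + x2 + x3"

definition e01 :: "rat \<Rightarrow> rat \<Rightarrow> rat \<Rightarrow> rat" where
  "e01 d1 d2 d3 = d1 + d2 + d3"

definition e11 :: "rat \<Rightarrow> rat \<Rightarrow> rat \<Rightarrow> rat \<Rightarrow> rat \<Rightarrow> rat \<Rightarrow> rat" where
  "e11 x1 x2 x3 d1 d2 d3 = x1*d2 + d1*x2 + x2*d3 + d2*x3 + x3*d1 + d3*x1"

end

theory Submission
  imports Defs
begin

(* For a cuboid with unit space diagonal, two face diagonals sharing the
   edge x3 satisfy
       (d1 d2)^2 = (x2^2 + x3^2)(x3^2 + x1^2) = x3^2 (x1^2+x2^2+x3^2) + (x1 x2)^2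
                 = x3^2 + (x1 x2)^2 < (x3 + x1 x2)^2,
   hence d1 d2 < x3 + x1 x2, and cyclically.  Since d1^2+d2^2+d3^2 = 2, summing
   the three bounds gives (d1+d2+d3)^2 < (x1+x2+x3+1)^2, i.e. e01 < e10 + 1 for
   every such cuboid.  The family e01 = c, e10 = c - 1 requires e01 = e10 + 1,
   which is therefore impossible (whatever the value of e11). *)

lemma face_diagonal_product_bound:
  fixes x1 x2 x3 d1 d2 :: "'a::linordered_field"
  assumes pos: "x1 > 0" "x2 > 0" "x3 > 0" "d1 > 0" "d2 > 0"
    and unit: "x1^2 + x2^2 + x3^2 = 1"
    and diag1: "x2^2 + x3^2 = d1^2" and diag2: "x3^2 + x1^2 = d2^2"
  shows "d1 * d2 < x3 + x1 * x2"
proof -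
  have "(d1 * d2)^2 = (x2^2 + x3^2) * (x3^2 + x1^2)"
    using diag1 diag2 by (simp add: power_mult_distrib)
  also have "\<dots> = x3^2 * (x1^2 + x2^2 + x3^2) + (x1 * x2)^2"
    by (simp add: algebra_simps power2_eq_square)
  also have "\<dots> = x3^2 + (x1 * x2)^2"
    using unit by simp
  also have "\<dots> < (x3 + x1 * x2)^2"
    using pos by (simp add: power2_eq_square algebra_simps)
  finally have "(d1 * d2)^2 < (x3 + x1 * x2)^2" .
  then show ?thesis
    by (rule power_less_imp_less_base) (use pos in simp)
qed

lemma face_diagonal_sum_bound:
  fixes x1 x2 x3 d1 d2 d3 :: "'a::linordered_field"
  assumes pos: "x1 > 0" "x2 > 0" "x3 > 0" "d1 > 0" "d2 > 0" "d3 > 0"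
    and unit: "x1^2 + x2^2 + x3^2 = 1"
    and diag1: "x2^2 + x3^2 = d1^2" and diag2: "x3^2 + x1^2 = d2^2"
    and diag3: "x1^2 + x2^2 = d3^2"
  shows "d1 + d2 + d3 < x1 + x2 + x3 + 1"
proof -
  have b3: "d1 * d2 < x3 + x1 * x2"
    using face_diagonal_product_bound[OF pos(1-5) unit diag1 diag2] .
  have b1: "d2 * d3 < x1 + x2 * x3"
    using face_diagonal_product_bound[of x2 x3 x1 d2 d3] pos unit diag2 diag3
    by (simp add: algebra_simps)
  have b2: "d3 * d1 < x2 + x3 * x1"
    using face_diagonal_product_bound[of x3 x1 x2 d3 d1] pos unit diag1 diag3
    by (simp add: algebra_simps)
  have "(d1 + d2 + d3)^2 = (d1^2 + d2^2 + d3^2) + 2 * (d1*d2 + d2*d3 + d3*d1)"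
    by (simp add: power2_eq_square algebra_simps)
  also have "\<dots> = 2 * (x1^2 + x2^2 + x3^2) + 2 * (d1*d2 + d2*d3 + d3*d1)"
    using diag1 diag2 diag3 by simp
  also have "\<dots> < 2 * (x1^2 + x2^2 + x3^2) + 2 * (x1 + x2 + x3 + x1*x2 + x2*x3 + x3*x1)"
    using b1 b2 b3 by simp
  also have "\<dots> = (x1 + x2 + x3 + 1)^2"
    using unit by (simp add: power2_eq_square algebra_simps)
  finally have "(d1 + d2 + d3)^2 < (x1 + x2 + x3 + 1)^2" .
  then show ?thesis
    by (rule power_less_imp_less_base) (use pos in simp)
qed

theorem theorem4p1:
  "\<not> (\<exists>x1 x2 x3 d1 d2 d3 c :: rat.
        x1 > 0 \<and> x2 > 0 \<and> x3 > 0 \<and> d1 > 0 \<and> d2 > 0 \<and> d3 > 0 \<and>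
        x1^2 + x2^2 + x3^2 = 1 \<and>
        x2^2 + x3^2 = d1^2 \<and> x3^2 + x1^2 = d2^2 \<and> x1^2 + x2^2 = d3^2 \<and>
        e11 x1 x2 x3 d1 d2 d3 = c \<and> e01 d1 d2 d3 = c \<and> e10 x1 x2 x3 = c - 1)"
proof
  assume "\<exists>x1 x2 x3 d1 d2 d3 c :: rat.
        x1 > 0 \<and> x2 > 0 \<and> x3 > 0 \<and> d1 > 0 \<and> d2 > 0 \<and> d3 > 0 \<and>
        x1^2 + x2^2 + x3^2 = 1 \<and>
        x2^2 + x3^2 = d1^2 \<and> x3^2 + x1^2 = d2^2 \<and> x1^2 + x2^2 = d3^2 \<and>
        e11 x1 x2 x3 d1 d2 d3 = c \<and> e01 d1 d2 d3 = c \<and> e10 x1 x2 x3 = c - 1"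
  then obtain x1 x2 x3 d1 d2 d3 c :: rat
    where pos: "x1 > 0" "x2 > 0" "x3 > 0" "d1 > 0" "d2 > 0" "d3 > 0"
      and unit: "x1^2 + x2^2 + x3^2 = 1"
      and diags: "x2^2 + x3^2 = d1^2" "x3^2 + x1^2 = d2^2" "x1^2 + x2^2 = d3^2"
      and family: "e01 d1 d2 d3 = c" "e10 x1 x2 x3 = c - 1"
    by blast
  have "e01 d1 d2 d3 < e10 x1 x2 x3 + 1"
    using face_diagonal_sum_bound[OF pos unit diags] by (simp add: e01_def e10_def)
  with family show False by simp
qed

end
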